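(* Let $\Gamma$ be a finite subset of ${\sf Frm}$ and $A\in{\sf Frm}$. Then the following are equivalent: (i) $\vdash_{\sf WF_{N_2}}\bigwedge\Gamma\rightarrow A$; (ii) $\Gamma\Rightarrow A$ is derivable in ${\sf GWF_{N_2}}$; (iii) $\Gamma\Rightarrow A$ is derivable in ${\sf GWF^s_{N_2}}$.
   Context: Language: countably many atoms $p,q,\dots$, the constant $\bot$, and binary connectives $\wedge,\vee,\rightarrow$ ($\rightarrow$ is strict implication). ${\sf Frm}$ is the set of formulas built from atoms and $\bot$ with $\wedge,\vee,\rightarrow$; $A,B,C,D$ range over ${\sf Frm}$. Let $\supset$ be a new binary symbol (material implication) and ${\sf Frm_1}={\sf Frm}\cup\{A\supset B : A,B\in{\sf Frm}\}$ (no nesting of $\supset$). ${\sf Frm_2}$ is the smallest set containing ${\sf Frm_1}$ and closed under $\wedge$ and $\vee$; $X,Y,Z$ range over ${\sf Frm_2}$. Multi-succedent sequents are $\Gamma\Rightarrow\Delta$ with $\Gamma,\Delta$ finite multisets of ${\sf Frm_2}$-formulas. The calculus ${\sf GWF_{N_2}}$ has initial sequents $(id)$ $p,\Gamma\Rightarrow\Delta,p$ ($p$ an atom) and $(L_\bot)$ $\bot,\Gamma\Rightarrow\Delta$, and rules (premises / conclusion): $(L_\wedge)$ $X,Y,\Gamma\Rightarrow\Delta$ / $X\wedge Y,\Gamma\Rightarrow\Delta$; $(R_\wedge)$ $\Gamma\Rightarrow\Delta,X$ and $\Gamma\Rightarrow\Delta,Y$ / $\Gamma\Rightarrow\Delta,X\wedge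 Y$; $(L_\vee)$ $X,\Gamma\Rightarrow\Delta$ and $Y,\Gamma\Rightarrow\Delta$ / $X\vee Y,\Gamma\Rightarrow\Delta$; $(R_\vee)$ $\Gamma\Rightarrow\Delta,X,Y$ / $\Gamma\Rightarrow\Delta,X\vee Y$; $(L_\supset)$ $\Gamma\Rightarrow\Delta,A$ and $B,\Gamma\Rightarrow\Delta$ / $A\supset B,\Gamma\Rightarrow\Delta$; $(R_\supset)$ $A,\Gamma\Rightarrow\Delta,B$ / $\Gamma\Rightarrow\Delta,A\supset B$; $(LR_\rightarrow)$ $C\supset D,A\Rightarrow B$ / $\Gamma,C\rightarrow D\Rightarrow\Delta,A\rightarrow B$; $(R_\rightarrow)$ $A\Rightarrow B$ / $\Gamma\Rightarrow\Delta,A\rightarrow B$. The single-succedent calculus ${\sf GWF^s_{N_2}}$ (sequents $\Gamma\Rightarrow Z$, $Z\in{\sf Frm_2}$) has initial sequents $(id^s)$ $p,\Gamma\Rightarrow p$ and $(L^s_\bot)$ $\bot,\Gamma\Rightarrow Z$, and rules: $(L^s_\wedge)$ $X,Y,\Gamma\Rightarrow Z$ / $X\wedge Y,\Gamma\Rightarrow Z$; $(R^s_\wedge)$ $\Gamma\Rightarrow X$ and $\Gamma\Rightarrow Y$ / $\Gamma\Rightarrow X\wedge Y$; $(L^s_\vee)$ $X,\Gamma\Rightarrow Z$ and $Y,\Gamma\Rightarrow Z$ / $X\vee Y,\Gamma\Rightarrow Z$; $(R^s_{\vee_l})$ $\Gamma\Rightarrow X$ / $\Gamma\Rightarrow X\vee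 Y$; $(R^s_{\vee_r})$ $\Gamma\Rightarrow Y$ / $\Gamma\Rightarrow X\vee Y$; $(L^s_\supset)$ $A\supset B,\Gamma\Rightarrow A$ and $B,\Gamma\Rightarrow Z$ / $A\supset B,\Gamma\Rightarrow Z$; $(R^s_\supset)$ $A,\Gamma\Rightarrow B$ / $\Gamma\Rightarrow A\supset B$; $(LR^s_\rightarrow)$ $C\supset D,A\Rightarrow B$ / $\Gamma,C\rightarrow D\Rightarrow A\rightarrow B$; $(R^s_\rightarrow)$ $A\Rightarrow B$ / $\Gamma\Rightarrow A\rightarrow B$. In all rules $A,B,C,D\in{\sf Frm}$, $X,Y,Z\in{\sf Frm_2}$, $\Gamma,\Delta$ arbitrary finite multisets of ${\sf Frm_2}$-formulas. The Hilbert system ${\sf WF_{N_2}}$ over ${\sf Frm}$ has axiom schemes $A\rightarrow(A\vee B)$; $B\rightarrow(A\vee B)$; $(A\wedge B)\rightarrow A$; $(A\wedge B)\rightarrow B$; $A\wedge(B\vee C)\rightarrow(A\wedge B)\vee(A\wedge C)$; $A\rightarrow A$; $\bot\rightarrow A$; and rules (from theorems to a theorem): from $A$ and $A\rightarrow B$ infer $B$; from $A$ infer $B\rightarrow A$; from $A\rightarrow B$ and $B\rightarrow C$ infer $A\rightarrow C$; from $A\rightarrow B$ and $A\rightarrow C$ infer $A\rightarrow(B\wedge C)$; from $A\rightarrow C$ and $B\rightarrow C$ infer $(A\vee B)\rightarrow C$; from $A$ and $B$ infer $A\wedge B$; (${\sf N_2}$) from $C\rightarrow A\vee D$ and $C\wedge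 B\rightarrow D$ infer $(A\rightarrow B)\rightarrow(C\rightarrow D)$. $\vdash_{\sf WF_{N_2}}A$ means $A$ is a theorem of this system. $\bigwedge\Gamma$ is the conjunction of the members of $\Gamma$ (the empty conjunction read as $\top:=\bot\rightarrow\bot$). *)

theory Defs
  imports Main "HOL-Library.Multiset"
begin

(* One syntax type for all formulas; MImp is material implication (\<supset>),
   Imp is strict implication (\<rightarrow>). Frm, Frm_1, Frm_2 are carved out by predicates. *)
datatype fm = Atom nat | Bot | Conj fm fm | Disj fm fm | Imp fm fm | MImp fm fm

fun is_frm :: "fm \<Rightarrow> bool" where
  "is_frm (Atom p) = True"
| "is_frm Bot = True"
| "is_frm (Conj A B) = (is_frm A \<and> is_frm B)"
| "is_frm (Disj A B) = (is_frm A \<and> is_frm B)"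
| "is_frm (Imp A B) = (is_frm A \<and> is_frm B)"
| "is_frm (MImp A B) = False"

definition is_frm1 :: "fm \<Rightarrow> bool" where
  "is_frm1 X \<longleftrightarrow> is_frm X \<or> (\<exists>A B. is_frm A \<and> is_frm B \<and> X = MImp A B)"

inductive is_frm2 :: "fm \<Rightarrow> bool" where
  f2_base: "is_frm1 X \<Longrightarrow> is_frm2 X"
| f2_conj: "is_frm2 X \<Longrightarrow> is_frm2 Y \<Longrightarrow> is_frm2 (Conj X Y)"
| f2_disj: "is_frm2 X \<Longrightarrow> is_frm2 Y \<Longrightarrow> is_frm2 (Disj X Y)"

definition ms2 :: "fm multiset \<Rightarrow> bool" where
  "ms2 G \<longleftrightarrow> (\<forall>X\<in>#G. is_frm2 X)"

definition Top :: fm where "Top = Imp Bot Bot"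

fun bigconj :: "fm list \<Rightarrow> fm" where
  "bigconj [] = Top"
| "bigconj [A] = A"
| "bigconj (A # B # Gs) = Conj A (bigconj (B # Gs))"

inductive hthm :: "fm \<Rightarrow> bool" where
  ax_or1: "is_frm A \<Longrightarrow> is_frm B \<Longrightarrow> hthm (Imp A (Disj A B))"
| ax_or2: "is_frm A \<Longrightarrow> is_frm B \<Longrightarrow> hthm (Imp B (Disj A B))"
| ax_and1: "is_frm A \<Longrightarrow> is_frm B \<Longrightarrow> hthm (Imp (Conj A B) A)"
| ax_and2: "is_frm A \<Longrightarrow> is_frm B \<Longrightarrow> hthm (Imp (Conj A B) B)"
| ax_dist: "is_frm A \<Longrightarrow> is_frm B \<Longrightarrow> is_frm C \<Longrightarrow>
    hthm (Imp (Conj A (Disj B C)) (Disj (Conj A B) (Conj A C)))"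
| ax_id: "is_frm A \<Longrightarrow> hthm (Imp A A)"
| ax_bot: "is_frm A \<Longrightarrow> hthm (Imp Bot A)"
| r_mp: "hthm A \<Longrightarrow> hthm (Imp A B) \<Longrightarrow> hthm B"
| r_wk: "hthm A \<Longrightarrow> is_frm B \<Longrightarrow> hthm (Imp B A)"
| r_trans: "hthm (Imp A B) \<Longrightarrow> hthm (Imp B C) \<Longrightarrow> hthm (Imp A C)"
| r_conjI: "hthm (Imp A B) \<Longrightarrow> hthm (Imp A C) \<Longrightarrow> hthm (Imp A (Conj B C))"
| r_disjE: "hthm (Imp A C) \<Longrightarrow> hthm (Imp B C) \<Longrightarrow> hthm (Imp (Disj A B) C)"
| r_adj: "hthm A \<Longrightarrow> hthm B \<Longrightarrow> hthm (Conj A B)"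
| r_N2: "hthm (Imp C (Disj A D)) \<Longrightarrow> hthm (Imp (Conj C B) D) \<Longrightarrow>
    hthm (Imp (Imp A B) (Imp C D))"

inductive gwf :: "fm multiset \<Rightarrow> fm multiset \<Rightarrow> bool" where
  g_id: "ms2 G \<Longrightarrow> ms2 D \<Longrightarrow> gwf (add_mset (Atom p) G) (add_mset (Atom p) D)"
| g_bot: "ms2 G \<Longrightarrow> ms2 D \<Longrightarrow> gwf (add_mset Bot G) D"
| g_Lconj: "gwf (add_mset X (add_mset Y G)) D \<Longrightarrow> gwf (add_mset (Conj X Y) G) D"
| g_Rconj: "gwf G (add_mset X D) \<Longrightarrow> gwf G (add_mset Y D) \<Longrightarrow> gwf G (add_mset (Conj X Y) D)"
| g_Ldisj: "gwf (add_mset X G) D \<Longrightarrow> gwf (add_mset Y G) D \<Longrightarrow> gwf (add_mset (Disj X Y) G) D"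
| g_Rdisj: "gwf G (add_mset X (add_mset Y D)) \<Longrightarrow> gwf G (add_mset (Disj X Y) D)"
| g_Lmimp: "is_frm A \<Longrightarrow> is_frm B \<Longrightarrow> gwf G (add_mset A D) \<Longrightarrow> gwf (add_mset B G) D \<Longrightarrow>
    gwf (add_mset (MImp A B) G) D"
| g_Rmimp: "is_frm A \<Longrightarrow> is_frm B \<Longrightarrow> gwf (add_mset A G) (add_mset B D) \<Longrightarrow>
    gwf G (add_mset (MImp A B) D)"
| g_LRimp: "is_frm A \<Longrightarrow> is_frm B \<Longrightarrow> is_frm C \<Longrightarrow> is_frm E \<Longrightarrow> ms2 G \<Longrightarrow> ms2 D \<Longrightarrow>
    gwf {#MImp C E, A#} {#B#} \<Longrightarrow> gwf (add_mset (Imp C E) G) (add_mset (Imp A B) D)"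
| g_Rimp: "is_frm A \<Longrightarrow> is_frm B \<Longrightarrow> ms2 G \<Longrightarrow> ms2 D \<Longrightarrow>
    gwf {#A#} {#B#} \<Longrightarrow> gwf G (add_mset (Imp A B) D)"

inductive gwfs :: "fm multiset \<Rightarrow> fm \<Rightarrow> bool" where
  s_id: "ms2 G \<Longrightarrow> gwfs (add_mset (Atom p) G) (Atom p)"
| s_bot: "ms2 G \<Longrightarrow> is_frm2 Z \<Longrightarrow> gwfs (add_mset Bot G) Z"
| s_Lconj: "gwfs (add_mset X (add_mset Y G)) Z \<Longrightarrow> gwfs (add_mset (Conj X Y) G) Z"
| s_Rconj: "gwfs G X \<Longrightarrow> gwfs G Y \<Longrightarrow> gwfs G (Conj X Y)"
| s_Ldisj: "gwfs (add_mset X G) Z \<Longrightarrow> gwfs (add_mset Y G) Z \<Longrightarrow> gwfs (add_mset (Disj X Y) G) Z"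
| s_Rdisjl: "gwfs G X \<Longrightarrow> is_frm2 Y \<Longrightarrow> gwfs G (Disj X Y)"
| s_Rdisjr: "gwfs G Y \<Longrightarrow> is_frm2 X \<Longrightarrow> gwfs G (Disj X Y)"
| s_Lmimp: "is_frm A \<Longrightarrow> is_frm B \<Longrightarrow> gwfs (add_mset (MImp A B) G) A \<Longrightarrow> gwfs (add_mset B G) Z \<Longrightarrow>
    gwfs (add_mset (MImp A B) G) Z"
| s_Rmimp: "is_frm A \<Longrightarrow> is_frm B \<Longrightarrow> gwfs (add_mset A G) B \<Longrightarrow> gwfs G (MImp A B)"
| s_LRimp: "is_frm A \<Longrightarrow> is_frm B \<Longrightarrow> is_frm C \<Longrightarrow> is_frm E \<Longrightarrow> ms2 G \<Longrightarrow>
    gwfs {#MImp C E, A#} B \<Longrightarrow> gwfs (add_mset (Imp C E) G) (Imp A B)"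
| s_Rimp: "is_frm A \<Longrightarrow> is_frm B \<Longrightarrow> ms2 G \<Longrightarrow>
    gwfs {#A#} B \<Longrightarrow> gwfs G (Imp A B)"

end

theory Submission
  imports Defs
begin

(* (i) implies (iii): every axiom and rule of WF_N2 is derivable in the single-succedent calculus
   once cut is admissible there. Cut is eliminated by induction on a weight of the cut formula and
   on the derivation of the right premise; principal cuts are reduced using that the left rules for
   conjunction, disjunction and material implication and the right rules for conjunction and
   material implication are invertible. The rule N2 itself becomes a cut on A \<or> D.

   (iii) implies (ii): single-succedent derivations translate rule by rule, except that the
   single-succedent left rule for A \<supset> B keeps A \<supset> B in its left premise. Inverting that premise
   puts A twice on the right, and contraction on the right, admissible for Frm formulas, removes
   the copy.

   (ii) implies (i): the multi-succedent calculus is sound for prime filters of the Hilbert system,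
   reading strict implication as membership and material implication classically; the rule LR\<rightarrow> is
   sound precisely because of N2. By Zorn's lemma a non-theorem C \<rightarrow> A is refuted by a prime
   filter containing C but not A. *)

section \<open>Formula classes and contexts\<close>

lemma is_frm2_if_is_frm: "is_frm A \<Longrightarrow> is_frm2 A"
  by (simp add: f2_base is_frm1_def)

inductive_cases is_frm2_ConjE: "is_frm2 (Conj X Y)"
inductive_cases is_frm2_DisjE: "is_frm2 (Disj X Y)"

lemma is_frm2_simps [simp]:
  "is_frm2 (Atom p)" "is_frm2 Bot"
  "is_frm2 (Conj X Y) \<longleftrightarrow> is_frm2 X \<and> is_frm2 Y"
  "is_frm2 (Disj X Y) \<longleftrightarrow> is_frm2 X \<and> is_frm2 Y"
  "is_frm2 (Imp A B) \<longleftrightarrow> is_frm A \<and> is_frm B"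
  "is_frm2 (MImp A B) \<longleftrightarrow> is_frm A \<and> is_frm B"
  by (auto simp: is_frm1_def intro: is_frm2.intros is_frm2_if_is_frm
      elim: is_frm2.cases elim!: is_frm2_ConjE is_frm2_DisjE)

lemma ms2_simps [simp]:
  "ms2 {#}" "ms2 (add_mset X G) \<longleftrightarrow> is_frm2 X \<and> ms2 G" "ms2 (G + H) \<longleftrightarrow> ms2 G \<and> ms2 H"
  by (auto simp: ms2_def)

lemma add_mset_eq_add_mset_cases:
  assumes "add_mset a M = add_mset b N"
  obtains "a = b" "M = N" | K where "M = add_mset b K" "N = add_mset a K"
  using assms by (auto simp: add_eq_conv_ex)

lemma member_if_add_mset_eq: "add_mset a M = add_mset b N \<Longrightarrow> a \<noteq> b \<Longrightarrow> a \<in># N"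
  by (erule add_mset_eq_add_mset_cases) auto

lemma add_mset_eq_add_mset_twice_cases:
  assumes "add_mset a M = add_mset b (add_mset b N)"
  obtains "a = b" "M = add_mset b N" | K where "M = add_mset b (add_mset b K)" "N = add_mset a K"
  using assms
proof (cases rule: add_mset_eq_add_mset_cases)
  case (2 K)
  from 2(2) show ?thesis
    by (cases rule: add_mset_eq_add_mset_cases) (use that 2(1) in auto)
qed (use that in simp)

lemma ms2_if_add_mset_eq:
  "add_mset a M = add_mset b N \<Longrightarrow> is_frm2 a \<Longrightarrow> ms2 M \<Longrightarrow> is_frm2 b \<and> ms2 N"
  by (metis ms2_simps(2))

lemma member_ms2_if_add_mset_eq_twice:
  assumes "add_mset X M = add_mset F (add_mset F D)" "is_frm2 X" "ms2 M"
  shows "X \<in># add_mset F D" "ms2 (add_mset F D)"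
proof -
  have "set_mset (add_mset X M) = set_mset (add_mset F D)"
    using assms(1) by (metis set_mset_add_mset_insert insert_absorb2)
  then show "X \<in># add_mset F D" "ms2 (add_mset F D)" using assms(2,3) by (auto simp: ms2_def)
qed

section \<open>Cut admissibility in the single-succedent calculus\<close>

lemma gwfs_ms2: "gwfs G Z \<Longrightarrow> ms2 G \<and> is_frm2 Z"
  by (induction rule: gwfs.induct) (auto intro: is_frm2_if_is_frm)

lemma gwfs_weaken: "gwfs G Z \<Longrightarrow> is_frm2 W \<Longrightarrow> gwfs (add_mset W G) Z"
proof (induction rule: gwfs.induct)
  case (s_id G p)
  then show ?case using gwfs.s_id[of "add_mset W G" p] by (simp add: add_mset_commute)
next
  case (s_bot G Z)
  then show ?case using gwfs.s_bot[of "add_mset W G" Z] by (simp add: add_mset_commute)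
next
  case (s_Lconj X Y G Z)
  then show ?case using gwfs.s_Lconj[of X Y "add_mset W G" Z] by (simp add: add_mset_commute)
next
  case (s_Ldisj X G Z Y)
  then show ?case using gwfs.s_Ldisj[of X "add_mset W G" Z Y] by (simp add: add_mset_commute)
next
  case (s_Lmimp A B G Z)
  then show ?case using gwfs.s_Lmimp[of A B "add_mset W G" Z] by (simp add: add_mset_commute)
next
  case (s_Rmimp A B G)
  then show ?case using gwfs.s_Rmimp[of A B "add_mset W G"] by (simp add: add_mset_commute)
next
  case (s_LRimp A B C E G)
  then show ?case using gwfs.s_LRimp[of A B C E "add_mset W G"] by (simp add: add_mset_commute)
qed (auto intro: gwfs.intros)

lemma gwfs_id_mem: "Atom p \<in># G \<Longrightarrow> ms2 G \<Longrightarrow> gwfs G (Atom p)"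
  by (auto elim!: mset_add intro: gwfs.s_id)

lemma gwfs_bot_mem: "Bot \<in># G \<Longrightarrow> ms2 G \<Longrightarrow> is_frm2 Z \<Longrightarrow> gwfs G Z"
  by (auto elim!: mset_add intro: gwfs.s_bot)

lemma gwfs_LRimp_mem:
  "Imp C E \<in># G \<Longrightarrow> ms2 G \<Longrightarrow> is_frm A \<Longrightarrow> is_frm B \<Longrightarrow> gwfs {#MImp C E, A#} B \<Longrightarrow>
   gwfs G (Imp A B)"
  by (auto elim!: mset_add intro: gwfs.s_LRimp)

(* The left rules for X whose premise keeps the succedent are invertible: X may be replaced by
   any member of left_inversions X. *)
fun left_inversions :: "fm \<Rightarrow> fm multiset set" where
  "left_inversions (Conj X Y) = {{#X, Y#}}"
| "left_inversions (Disj X Y) = {{#X#}, {#Y#}}"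
| "left_inversions (MImp A B) = {{#B#}}"
| "left_inversions _ = {}"

lemma ms2_left_inversions: "is_frm2 X \<Longrightarrow> H \<in> left_inversions X \<Longrightarrow> ms2 H"
  by (cases X) (auto intro: is_frm2_if_is_frm)

lemma gwfs_left_inversion:
  assumes "gwfs (add_mset X G) Z" and H: "H \<in> left_inversions X"
  shows "gwfs (H + G) Z"
proof -
  have "gwfs (H + G) Z" if "gwfs D Z" "D = add_mset X G" for D G Z
    using that
  proof (induction arbitrary: G rule: gwfs.induct)
    case (s_id G0 p)
    have "Atom p \<in># G" using member_if_add_mset_eq[OF s_id.prems] H by (cases X) auto
    then show ?case using ms2_if_add_mset_eq[OF s_id.prems] s_id.hyps ms2_left_inversions[OF _ H]
      by (intro gwfs_id_mem) auto
  next
    case (s_bot G0 Z)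
    have "Bot \<in># G" using member_if_add_mset_eq[OF s_bot.prems] H by (cases X) auto
    then show ?case using ms2_if_add_mset_eq[OF s_bot.prems] s_bot.hyps ms2_left_inversions[OF _ H]
      by (intro gwfs_bot_mem) auto
  next
    case (s_LRimp A B C E G0)
    have "Imp C E \<in># G" using member_if_add_mset_eq[OF s_LRimp.prems] H by (cases X) auto
    then show ?case using ms2_if_add_mset_eq[OF s_LRimp.prems] s_LRimp.hyps ms2_left_inversions[OF _ H]
      by (intro gwfs_LRimp_mem) auto
  next
    case (s_Rimp A B G0)
    then show ?case using ms2_left_inversions[OF _ H] by (intro gwfs.s_Rimp) auto
  next
    case (s_Rmimp A B G0)
    then show ?case
      using s_Rmimp.IH[of "add_mset A G"] gwfs.s_Rmimp[of A B "H + G"] by (simp add: add_mset_commute)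
  next
    case (s_Lconj X' Y' G0 Z)
    from s_Lconj.prems show ?case
    proof (cases rule: add_mset_eq_add_mset_cases)
      case 1 then show ?thesis using s_Lconj.hyps H by auto
    next
      case (2 K)
      then show ?thesis using s_Lconj.IH[of "add_mset X' (add_mset Y' K)"] gwfs.s_Lconj[of X' Y' "H + K" Z]
        by (simp add: add_mset_commute)
    qed
  next
    case (s_Ldisj X' G0 Z Y')
    from s_Ldisj.prems show ?case
    proof (cases rule: add_mset_eq_add_mset_cases)
      case 1 then show ?thesis using s_Ldisj.hyps H by auto
    next
      case (2 K)
      then show ?thesis using s_Ldisj.IH(1)[of "add_mset X' K"] s_Ldisj.IH(2)[of "add_mset Y' K"]
          gwfs.s_Ldisj[of X' "H + K" Z Y']
        by (simp add: add_mset_commute)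
    qed
  next
    case (s_Lmimp A B G0 Z)
    from s_Lmimp.prems show ?case
    proof (cases rule: add_mset_eq_add_mset_cases)
      case 1 then show ?thesis using s_Lmimp.hyps H by auto
    next
      case (2 K)
      then show ?thesis using s_Lmimp.IH(1)[of "add_mset (MImp A B) K"] s_Lmimp.IH(2)[of "add_mset B K"]
          gwfs.s_Lmimp[of A B "H + K" Z] s_Lmimp.hyps(1,2)
        by (simp add: add_mset_commute)
    qed
  qed (auto intro: gwfs.intros)
  then show ?thesis using assms by blast
qed

lemma gwfs_weaken_mset: "gwfs G Z \<Longrightarrow> ms2 H \<Longrightarrow> gwfs (H + G) Z"
  by (induction H) (auto intro: gwfs_weaken)

(* A derivation of G \<Rightarrow> W yields one of H + G \<Rightarrow> V for each (H, V); for Bot this is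
   ex falso on the right. *)
fun right_inversions :: "fm \<Rightarrow> (fm multiset \<times> fm) set" where
  "right_inversions (Conj X Y) = {({#}, X), ({#}, Y)}"
| "right_inversions (MImp A B) = {({#A#}, B)}"
| "right_inversions Bot = {({#}, V) | V. is_frm2 V}"
| "right_inversions _ = {}"

lemma ms2_right_inversions: "is_frm2 W \<Longrightarrow> (H, V) \<in> right_inversions W \<Longrightarrow> ms2 H \<and> is_frm2 V"
  by (cases W) (auto intro: is_frm2_if_is_frm)

lemma gwfs_right_inversion: "gwfs G W \<Longrightarrow> (H, V) \<in> right_inversions W \<Longrightarrow> gwfs (H + G) V"
proof (induction rule: gwfs.induct)
  case (s_bot G Z)
  then show ?case using ms2_right_inversions[OF _ s_bot.prems] by (intro gwfs_bot_mem) auto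
next
  case (s_Lconj X Y G Z)
  then show ?case using gwfs.s_Lconj[of X Y "H + G" V] by (simp add: add_mset_commute)
next
  case (s_Ldisj X G Z Y)
  then show ?case using gwfs.s_Ldisj[of X "H + G" V Y] by (simp add: add_mset_commute)
next
  case (s_Lmimp A B G Z)
  have "ms2 H" using ms2_right_inversions[OF _ s_Lmimp.prems] gwfs_ms2[OF s_Lmimp.hyps(4)] by blast
  then show ?case using s_Lmimp gwfs_weaken_mset[OF s_Lmimp.hyps(3), of H]
      gwfs.s_Lmimp[of A B "H + G" V] by (simp add: add_mset_commute)
qed auto

definition cut_admissible :: "fm \<Rightarrow> bool" where
  "cut_admissible X \<longleftrightarrow> (\<forall>G Z. gwfs G X \<longrightarrow> gwfs (add_mset X G) Z \<longrightarrow> gwfs G Z)"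

lemma cut_admissibleD: "cut_admissible X \<Longrightarrow> gwfs G X \<Longrightarrow> gwfs (add_mset X G) Z \<Longrightarrow> gwfs G Z"
  unfolding cut_admissible_def by blast

lemma gwfs_left_inversion_swap:
  "gwfs (add_mset P (add_mset X G)) Z \<Longrightarrow> H \<in> left_inversions X \<Longrightarrow> gwfs (add_mset P (H + G)) Z"
  using gwfs_left_inversion[of X "add_mset P G" Z H] by (simp add: add_mset_commute)

lemma cut_Conj:
  assumes "cut_admissible A" "cut_admissible B" "gwfs G (Conj A B)"
    and "gwfs (add_mset A (add_mset B G)) Z"
  shows "gwfs G Z"
proof -
  have A: "gwfs G A" and B: "gwfs G B" using gwfs_right_inversion[OF assms(3), of "{#}"] by simp_all
  have "gwfs (add_mset B G) A" using gwfs_weaken[OF A] gwfs_ms2[OF B] by simp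
  then have "gwfs (add_mset B G) Z" using cut_admissibleD[OF assms(1)] assms(4) by blast
  then show ?thesis by (rule cut_admissibleD[OF assms(2) B])
qed

lemma cut_MImp:
  assumes "cut_admissible A" "cut_admissible B" "gwfs G A" "gwfs G (MImp A B)"
    and "gwfs (add_mset B G) Z"
  shows "gwfs G Z"
proof -
  have "gwfs (add_mset A G) B" using gwfs_right_inversion[OF assms(4), of "{#A#}" B] by simp
  then have "gwfs G B" by (rule cut_admissibleD[OF assms(1,3)])
  then show ?thesis by (rule cut_admissibleD[OF assms(2) _ assms(5)])
qed

lemma cut_Disj:
  assumes "cut_admissible P" "cut_admissible Q"
  shows "gwfs G (Disj P Q) \<Longrightarrow> gwfs (add_mset P G) Z \<Longrightarrow> gwfs (add_mset Q G) Z \<Longrightarrow> gwfs G Z"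
proof (induction G "Disj P Q" rule: gwfs.induct)
  case (s_bot G)
  then show ?case using gwfs_ms2 by (metis gwfs.s_bot ms2_simps(2))
next
  case (s_Lconj X Y G)
  then show ?case using gwfs_left_inversion_swap[of _ "Conj X Y" G Z "{#X, Y#}"] by (auto intro: gwfs.s_Lconj)
next
  case (s_Ldisj X G Y)
  then show ?case
    using gwfs_left_inversion_swap[of _ "Disj X Y" G Z "{#X#}"]
      gwfs_left_inversion_swap[of _ "Disj X Y" G Z "{#Y#}"] by (auto intro: gwfs.s_Ldisj)
next
  case (s_Lmimp A B G)
  then show ?case using gwfs_left_inversion_swap[of _ "MImp A B" G Z "{#B#}"] by (auto intro: gwfs.s_Lmimp)
qed (use assms in \<open>auto dest: cut_admissibleD\<close>)

lemma cut_Imp: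
  assumes cut: "cut_admissible (MImp C E)" and A: "is_frm A" and B: "is_frm B"
    and AB: "gwfs {#MImp C E, A#} B"
  shows "gwfs G (Imp C E) \<Longrightarrow> gwfs G (Imp A B)"
proof (induction G "Imp C E" rule: gwfs.induct)
  case (s_bot G)
  then show ?case using A B by (intro gwfs_bot_mem) (auto intro: is_frm2_if_is_frm)
next
  case (s_LRimp C' E' G)
  have "gwfs {#MImp C' E', A#} (MImp C E)"
    using s_LRimp gwfs_weaken[OF s_LRimp.hyps(6), of A] A
    by (intro gwfs.s_Rmimp) (auto simp: add_mset_commute intro: is_frm2_if_is_frm)
  moreover have "gwfs (add_mset (MImp C E) {#MImp C' E', A#}) B"
    using gwfs_weaken[OF AB, of "MImp C' E'"] s_LRimp.hyps by (simp add: add_mset_commute)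
  ultimately have "gwfs {#MImp C' E', A#} B" by (rule cut_admissibleD[OF cut])
  then show ?case using s_LRimp.hyps A B by (intro gwfs.s_LRimp) simp_all
next
  case (s_Rimp G)
  have "gwfs {#A#} (MImp C E)"
    using s_Rimp gwfs_weaken[OF s_Rimp.hyps(4), of A] A
    by (intro gwfs.s_Rmimp) (auto simp: add_mset_commute intro: is_frm2_if_is_frm)
  then have "gwfs {#A#} B" using cut_admissibleD[OF cut _ AB] by simp
  then show ?case using s_Rimp.hyps A B by (intro gwfs.s_Rimp) simp_all
qed (auto intro: gwfs.intros)

(* Imp weighs more than MImp: a principal cut on C \<rightarrow> E is reduced to a cut on C \<supset> E. *)
fun weight :: "fm \<Rightarrow> nat" where
  "weight (Conj X Y) = weight X + weight Y + 1"
| "weight (Disj X Y) = weight X + weight Y + 1"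
| "weight (MImp A B) = weight A + weight B + 1"
| "weight (Imp A B) = weight A + weight B + 2"
| "weight _ = 1"

lemma cut_admissible_if_lighter_admissible:
  assumes lighter: "\<And>Y. weight Y < weight X \<Longrightarrow> cut_admissible Y"
  shows "cut_admissible X"
proof -
  have "gwfs G Z" if "gwfs D Z" "D = add_mset X G" "gwfs G X" for D G Z
    using that
  proof (induction arbitrary: G rule: gwfs.induct)
    case (s_id G0 p)
    from s_id.prems(1) show ?case
    proof (cases rule: add_mset_eq_add_mset_cases)
      case 1 then show ?thesis using s_id.prems(2) by simp
    next
      case (2 K) then show ?thesis using gwfs_ms2[OF s_id.prems(2)] by (intro gwfs_id_mem) simp_all
    qed
  next
    case (s_bot G0 Z)
    from s_bot.prems(1) show ?case
    proof (cases rule: add_mset_eq_add_mset_cases)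
      case 1
      then show ?thesis using gwfs_right_inversion[OF s_bot.prems(2), of "{#}" Z] s_bot.hyps by auto
    next
      case (2 K)
      then show ?thesis using gwfs_ms2[OF s_bot.prems(2)] s_bot.hyps by (intro gwfs_bot_mem) simp_all
    qed
  next
    case (s_Lconj A B G0 Z)
    from s_Lconj.prems(1) show ?case
    proof (cases rule: add_mset_eq_add_mset_cases)
      case 1
      have "cut_admissible A" "cut_admissible B" using lighter 1(1)[symmetric] by simp_all
      then show ?thesis
        by (rule cut_Conj) (use s_Lconj.hyps s_Lconj.prems(2) 1(1)[symmetric] 1(2) in simp_all)
    next
      case (2 K)
      have "gwfs (add_mset A (add_mset B K)) Z"
        using s_Lconj.IH[of "add_mset A (add_mset B K)"] 2
          gwfs_left_inversion[of "Conj A B" K X "{#A, B#}"] s_Lconj.prems(2)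
        by (simp add: add_mset_commute)
      then show ?thesis using 2 by (simp add: gwfs.s_Lconj)
    qed
  next
    case (s_Ldisj A G0 Z B)
    from s_Ldisj.prems(1) show ?case
    proof (cases rule: add_mset_eq_add_mset_cases)
      case 1
      have "cut_admissible A" "cut_admissible B" using lighter 1(1)[symmetric] by simp_all
      then show ?thesis
        by (rule cut_Disj) (use s_Ldisj.hyps s_Ldisj.prems(2) 1(1)[symmetric] 1(2) in simp_all)
    next
      case (2 K)
      have "gwfs (add_mset A K) Z" "gwfs (add_mset B K) Z"
        using s_Ldisj.IH(1)[of "add_mset A K"] s_Ldisj.IH(2)[of "add_mset B K"] 2
          gwfs_left_inversion[of "Disj A B" K X "{#A#}"]
          gwfs_left_inversion[of "Disj A B" K X "{#B#}"] s_Ldisj.prems(2)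
        by (simp_all add: add_mset_commute)
      then show ?thesis using 2 by (simp add: gwfs.s_Ldisj)
    qed
  next
    case (s_Lmimp A B G0 Z)
    from s_Lmimp.prems(1) show ?case
    proof (cases rule: add_mset_eq_add_mset_cases)
      case 1
      have "cut_admissible A" "cut_admissible B" using lighter 1(1)[symmetric] by simp_all
      moreover have "gwfs G A" using s_Lmimp.IH(1) s_Lmimp.prems 1 by simp
      ultimately show ?thesis
        by (rule cut_MImp) (use s_Lmimp.hyps(4) s_Lmimp.prems(2) 1(1)[symmetric] 1(2) in simp_all)
    next
      case (2 K)
      have "gwfs (add_mset (MImp A B) K) A" "gwfs (add_mset B K) Z"
        using s_Lmimp.IH(1)[of "add_mset (MImp A B) K"] s_Lmimp.IH(2)[of "add_mset B K"] 2
          gwfs_left_inversion[of "MImp A B" K X "{#B#}"] s_Lmimp.prems(2)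
        by (simp_all add: add_mset_commute)
      then show ?thesis using 2 s_Lmimp.hyps by (simp add: gwfs.s_Lmimp)
    qed
  next
    case (s_Rmimp A B G0)
    have "gwfs (add_mset A G) X"
      using gwfs_weaken[OF s_Rmimp.prems(2), of A] s_Rmimp.hyps by (simp add: is_frm2_if_is_frm)
    moreover have "add_mset A G0 = add_mset X (add_mset A G)"
      using s_Rmimp.prems(1) by (simp add: add_mset_commute)
    ultimately have "gwfs (add_mset A G) B" by (rule s_Rmimp.IH[rotated])
    then show ?case using s_Rmimp.hyps by (intro gwfs.s_Rmimp)
  next
    case (s_LRimp A B C E G0)
    from s_LRimp.prems(1) show ?case
    proof (cases rule: add_mset_eq_add_mset_cases)
      case 1
      have "cut_admissible (MImp C E)" using lighter 1(1)[symmetric] by simp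
      then show ?thesis
        by (rule cut_Imp) (use s_LRimp.hyps s_LRimp.prems(2) 1(1)[symmetric] in simp_all)
    next
      case (2 K)
      then show ?thesis using gwfs_ms2[OF s_LRimp.prems(2)] s_LRimp.hyps by (intro gwfs_LRimp_mem) simp_all
    qed
  next
    case (s_Rimp A B G0)
    then show ?case using gwfs_ms2[OF s_Rimp.prems(2)] by (intro gwfs.s_Rimp) simp_all
  next
    case (s_Rconj G0 A B) then show ?case by (simp add: gwfs.s_Rconj)
  next
    case (s_Rdisjl G0 A B) then show ?case by (simp add: gwfs.s_Rdisjl)
  next
    case (s_Rdisjr G0 B A) then show ?case by (simp add: gwfs.s_Rdisjr)
  qed
  then show ?thesis unfolding cut_admissible_def by blast
qed

lemma cut_admissible: "cut_admissible X"
proof (induction "weight X" arbitrary: X rule: less_induct)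
  case less
  then show ?case by (rule cut_admissible_if_lighter_admissible)
qed

theorem gwfs_cut: "gwfs G X \<Longrightarrow> gwfs (add_mset X G) Z \<Longrightarrow> gwfs G Z"
  by (rule cut_admissibleD[OF cut_admissible])

section \<open>Contraction and the multi-succedent calculus\<close>

lemma gwf_weaken: "gwf G D \<Longrightarrow> ms2 G' \<Longrightarrow> ms2 D' \<Longrightarrow> gwf (G' + G) (D' + D)"
proof (induction rule: gwf.induct)
  case (g_id G D p) then show ?case using gwf.g_id[of "G' + G" "D' + D" p] by simp
next
  case (g_bot G D) then show ?case using gwf.g_bot[of "G' + G" "D' + D"] by simp
next
  case (g_Lconj X Y G D) then show ?case using gwf.g_Lconj[of X Y "G' + G" "D' + D"] by simp
next
  case (g_Rconj G X D Y) then show ?case using gwf.g_Rconj[of "G' + G" X "D' + D" Y] by simp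
next
  case (g_Ldisj X G D Y) then show ?case using gwf.g_Ldisj[of X "G' + G" "D' + D" Y] by simp
next
  case (g_Rdisj G X Y D) then show ?case using gwf.g_Rdisj[of "G' + G" X Y "D' + D"] by simp
next
  case (g_Lmimp A B G D) then show ?case using gwf.g_Lmimp[of A B "G' + G" "D' + D"] by simp
next
  case (g_Rmimp A B G D) then show ?case using gwf.g_Rmimp[of A B "G' + G" "D' + D"] by simp
next
  case (g_LRimp A B C E G D) then show ?case using gwf.g_LRimp[of A B C E "G' + G" "D' + D"] by simp
next
  case (g_Rimp A B G D) then show ?case using gwf.g_Rimp[of A B "G' + G" "D' + D"] by simp
qed

lemma gwf_id_mem: "Atom p \<in># G \<Longrightarrow> Atom p \<in># D \<Longrightarrow> ms2 G \<Longrightarrow> ms2 D \<Longrightarrow> gwf G D"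
  by (auto elim!: mset_add intro: gwf.g_id)

lemma gwf_bot_mem: "Bot \<in># G \<Longrightarrow> ms2 G \<Longrightarrow> ms2 D \<Longrightarrow> gwf G D"
  by (auto elim!: mset_add intro: gwf.g_bot)

lemma gwf_LRimp_mem:
  "Imp C E \<in># G \<Longrightarrow> Imp A B \<in># D \<Longrightarrow> ms2 G \<Longrightarrow> ms2 D \<Longrightarrow> gwf {#MImp C E, A#} {#B#} \<Longrightarrow>
   gwf G D"
  by (auto elim!: mset_add intro: gwf.g_LRimp)

lemma gwf_Rimp_mem: "Imp A B \<in># D \<Longrightarrow> ms2 G \<Longrightarrow> ms2 D \<Longrightarrow> gwf {#A#} {#B#} \<Longrightarrow> gwf G D"
  by (auto elim!: mset_add intro: gwf.g_Rimp)

fun multi_right_inversions :: "fm \<Rightarrow> fm multiset set" where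
  "multi_right_inversions (Conj X Y) = {{#X#}, {#Y#}}"
| "multi_right_inversions (Disj X Y) = {{#X, Y#}}"
| "multi_right_inversions _ = {}"

lemma ms2_multi_right_inversions: "is_frm2 W \<Longrightarrow> H \<in> multi_right_inversions W \<Longrightarrow> ms2 H"
  by (cases W) auto

lemma gwf_right_inversion:
  assumes "gwf G (add_mset W D)" and H: "H \<in> multi_right_inversions W"
  shows "gwf G (H + D)"
proof -
  have "gwf G (H + D)" if "gwf G D'" "D' = add_mset W D" for G D' D
    using that
  proof (induction arbitrary: D rule: gwf.induct)
    case (g_id G D' p)
    have "Atom p \<in># D" using member_if_add_mset_eq[OF g_id.prems] H by (cases W) simp_all
    then show ?case using ms2_if_add_mset_eq[OF g_id.prems] g_id.hyps ms2_multi_right_inversions[OF _ H]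
      by (intro gwf_id_mem) auto
  next
    case (g_bot G D')
    then show ?case using ms2_multi_right_inversions[OF _ H] by (intro gwf_bot_mem) auto
  next
    case (g_LRimp A B C E G D')
    have "Imp A B \<in># D" using member_if_add_mset_eq[OF g_LRimp.prems] H by (cases W) simp_all
    then show ?case using ms2_if_add_mset_eq[OF g_LRimp.prems] g_LRimp.hyps ms2_multi_right_inversions[OF _ H]
      by - (rule gwf_LRimp_mem[of C E _ A B], auto)
  next
    case (g_Rimp A B G D')
    have "Imp A B \<in># D" using member_if_add_mset_eq[OF g_Rimp.prems] H by (cases W) simp_all
    then show ?case using ms2_if_add_mset_eq[OF g_Rimp.prems] g_Rimp.hyps ms2_multi_right_inversions[OF _ H]
      by - (rule gwf_Rimp_mem[of A B], auto)
  next
    case (g_Lconj X Y G D') then show ?case by (simp add: gwf.g_Lconj)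
  next
    case (g_Ldisj X G D' Y) then show ?case by (simp add: gwf.g_Ldisj)
  next
    case (g_Lmimp A B G D')
    then show ?case using g_Lmimp.IH(1)[of "add_mset A D"] gwf.g_Lmimp[of A B G "H + D"]
      by (simp add: add_mset_commute)
  next
    case (g_Rconj G X D' Y)
    from g_Rconj.prems show ?case
    proof (cases rule: add_mset_eq_add_mset_cases)
      case 1 then show ?thesis using g_Rconj.hyps H by auto
    next
      case (2 K)
      then show ?thesis using g_Rconj.IH(1)[of "add_mset X K"] g_Rconj.IH(2)[of "add_mset Y K"]
          gwf.g_Rconj[of G X "H + K" Y] by (simp add: add_mset_commute)
    qed
  next
    case (g_Rdisj G X Y D')
    from g_Rdisj.prems show ?case
    proof (cases rule: add_mset_eq_add_mset_cases)
      case 1 then show ?thesis using g_Rdisj.hyps H by auto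
    next
      case (2 K)
      then show ?thesis using g_Rdisj.IH[of "add_mset X (add_mset Y K)"]
          gwf.g_Rdisj[of G X Y "H + K"] by (simp add: add_mset_commute)
    qed
  next
    case (g_Rmimp A B G D')
    from g_Rmimp.prems show ?case
    proof (cases rule: add_mset_eq_add_mset_cases)
      case 1 then show ?thesis using H by auto
    next
      case (2 K)
      then show ?thesis using g_Rmimp.IH[of "add_mset B K"] g_Rmimp.hyps
          gwf.g_Rmimp[of A B G "H + K"] by (simp add: add_mset_commute)
    qed
  qed
  then show ?thesis using assms by blast
qed

lemma gwf_Lmimp_inversion:
  assumes "gwf (add_mset (MImp A B) G) D"
  shows "gwf G (add_mset A D)"
proof -
  have "gwf G (add_mset A D)" if "gwf G' D" "G' = add_mset (MImp A B) G" for G' G D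
    using that
  proof (induction arbitrary: G rule: gwf.induct)
    case (g_id G' D p)
    then show ?case using ms2_if_add_mset_eq[OF g_id.prems] member_if_add_mset_eq[OF g_id.prems]
      by (intro gwf_id_mem[of p]) (auto intro: is_frm2_if_is_frm)
  next
    case (g_bot G' D)
    then show ?case using ms2_if_add_mset_eq[OF g_bot.prems] member_if_add_mset_eq[OF g_bot.prems]
      by (intro gwf_bot_mem) (auto intro: is_frm2_if_is_frm)
  next
    case (g_LRimp A' B' C E G' D)
    have "Imp C E \<in># G" using member_if_add_mset_eq[OF g_LRimp.prems] by simp
    moreover have "ms2 G" "is_frm A" using ms2_if_add_mset_eq[OF g_LRimp.prems] g_LRimp.hyps by auto
    ultimately show ?case using g_LRimp.hyps
      by - (rule gwf_LRimp_mem[of C E _ A' B'], auto intro: is_frm2_if_is_frm)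
  next
    case (g_Rimp A' B' G' D)
    have "ms2 G" "is_frm A" using g_Rimp.prems g_Rimp.hyps by auto
    then show ?case using g_Rimp.hyps
      by - (rule gwf_Rimp_mem[of A' B'], auto intro: is_frm2_if_is_frm)
  next
    case (g_Lconj X Y G' D)
    from g_Lconj.prems show ?case
    proof (cases rule: add_mset_eq_add_mset_cases)
      case (2 K) then show ?thesis using g_Lconj.IH[of "add_mset X (add_mset Y K)"] gwf.g_Lconj
        by (simp add: add_mset_commute)
    qed simp
  next
    case (g_Ldisj X G' D Y)
    from g_Ldisj.prems show ?case
    proof (cases rule: add_mset_eq_add_mset_cases)
      case (2 K) then show ?thesis using g_Ldisj.IH(1)[of "add_mset X K"] g_Ldisj.IH(2)[of "add_mset Y K"]
          gwf.g_Ldisj by (simp add: add_mset_commute)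
    qed simp
  next
    case (g_Lmimp A' B' G' D)
    from g_Lmimp.prems show ?case
    proof (cases rule: add_mset_eq_add_mset_cases)
      case 1 then show ?thesis using g_Lmimp.hyps by simp
    next
      case (2 K)
      then show ?thesis using g_Lmimp.IH(1)[of K] g_Lmimp.IH(2)[of "add_mset B' K"] g_Lmimp.hyps
          gwf.g_Lmimp[of A' B' K "add_mset A D"] by (simp add: add_mset_commute)
    qed
  next
    case (g_Rconj G' X D Y)
    then show ?case using gwf.g_Rconj[of G X "add_mset A D" Y] by (simp add: add_mset_commute)
  next
    case (g_Rdisj G' X Y D)
    then show ?case using gwf.g_Rdisj[of G X Y "add_mset A D"] by (simp add: add_mset_commute)
  next
    case (g_Rmimp A' B' G' D)
    then show ?case using g_Rmimp.IH[of "add_mset A' G"] gwf.g_Rmimp[of A' B' G "add_mset A D"]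
      by (simp add: add_mset_commute)
  qed
  then show ?thesis using assms by blast
qed

definition right_contractible :: "fm \<Rightarrow> bool" where
  "right_contractible F \<longleftrightarrow> (\<forall>G D. gwf G (add_mset F (add_mset F D)) \<longrightarrow> gwf G (add_mset F D))"

lemma right_contractibleD:
  "right_contractible F \<Longrightarrow> gwf G (add_mset F (add_mset F D)) \<Longrightarrow> gwf G (add_mset F D)"
  unfolding right_contractible_def by blast

lemma gwf_contract_Conj:
  assumes "right_contractible X" "right_contractible Y"
    and "gwf G (add_mset X (add_mset (Conj X Y) D))" "gwf G (add_mset Y (add_mset (Conj X Y) D))"
  shows "gwf G (add_mset (Conj X Y) D)"
proof -
  have "gwf G (add_mset X (add_mset X D))" "gwf G (add_mset Y (add_mset Y D))"
    using gwf_right_inversion[of G "Conj X Y" "add_mset X D" "{#X#}"]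
      gwf_right_inversion[of G "Conj X Y" "add_mset Y D" "{#Y#}"] assms(3,4)
    by (simp_all add: add_mset_commute)
  then have "gwf G (add_mset X D)" "gwf G (add_mset Y D)"
    using right_contractibleD[OF assms(1)] right_contractibleD[OF assms(2)] by blast+
  then show ?thesis by (rule gwf.g_Rconj)
qed

lemma gwf_contract_Disj:
  assumes "right_contractible X" "right_contractible Y"
    and "gwf G (add_mset X (add_mset Y (add_mset (Disj X Y) D)))"
  shows "gwf G (add_mset (Disj X Y) D)"
proof -
  have "gwf G (add_mset X (add_mset X (add_mset Y (add_mset Y D))))"
    using gwf_right_inversion[of G "Disj X Y" "add_mset X (add_mset Y D)" "{#X, Y#}"] assms(3)
    by (simp add: add_mset_commute)
  then have "gwf G (add_mset Y (add_mset Y (add_mset X D)))"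
    using right_contractibleD[OF assms(1), of G "add_mset Y (add_mset Y D)"]
    by (simp add: add_mset_commute)
  then have "gwf G (add_mset Y (add_mset X D))" by (rule right_contractibleD[OF assms(2)])
  then show ?thesis by (simp add: add_mset_commute gwf.g_Rdisj)
qed

lemma right_contractible_if_smaller_contractible:
  assumes smaller: "\<And>F'. size F' < size F \<Longrightarrow> is_frm F' \<Longrightarrow> right_contractible F'" and F: "is_frm F"
  shows "right_contractible F"
proof -
  have "gwf G (add_mset F D)" if "gwf G D'" "D' = add_mset F (add_mset F D)" for G D' D
    using that
  proof (induction arbitrary: D rule: gwf.induct)
    case (g_id G D' p)
    then show ?case using member_ms2_if_add_mset_eq_twice[OF g_id.prems] by (intro gwf_id_mem[of p]) auto
  next
    case (g_bot G D')
    then show ?case by (intro gwf_bot_mem) auto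
  next
    case (g_LRimp A B C E G D')
    then show ?case using member_ms2_if_add_mset_eq_twice[OF g_LRimp.prems]
      by - (rule gwf_LRimp_mem[of C E _ A B], auto)
  next
    case (g_Rimp A B G D')
    then show ?case using member_ms2_if_add_mset_eq_twice[OF g_Rimp.prems]
      by - (rule gwf_Rimp_mem[of A B], auto)
  next
    case (g_Lconj X Y G D') then show ?case by (simp add: gwf.g_Lconj)
  next
    case (g_Ldisj X G D' Y) then show ?case by (simp add: gwf.g_Ldisj)
  next
    case (g_Lmimp A B G D')
    then show ?case using g_Lmimp.IH(1)[of "add_mset A D"] gwf.g_Lmimp[of A B G "add_mset F D"]
      by (simp add: add_mset_commute)
  next
    case (g_Rconj G X D' Y)
    from g_Rconj.prems show ?case
    proof (cases rule: add_mset_eq_add_mset_twice_cases)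
      case 1
      have "is_frm X" "is_frm Y" "size X < size F" "size Y < size F" using F 1(1)[symmetric] by auto
      then have "right_contractible X" "right_contractible Y" using smaller by blast+
      then show ?thesis using gwf_contract_Conj[of X Y G D] g_Rconj.hyps 1 by simp
    next
      case (2 K)
      then show ?thesis using g_Rconj.IH(1)[of "add_mset X K"] g_Rconj.IH(2)[of "add_mset Y K"]
          gwf.g_Rconj[of G X "add_mset F K" Y] by (simp add: add_mset_commute)
    qed
  next
    case (g_Rdisj G X Y D')
    from g_Rdisj.prems show ?case
    proof (cases rule: add_mset_eq_add_mset_twice_cases)
      case 1
      have "is_frm X" "is_frm Y" "size X < size F" "size Y < size F" using F 1(1)[symmetric] by auto
      then have "right_contractible X" "right_contractible Y" using smaller by blast+
      then show ?thesis using gwf_contract_Disj[of X Y G D] g_Rdisj.hyps 1 by simp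
    next
      case (2 K)
      then show ?thesis using g_Rdisj.IH[of "add_mset X (add_mset Y K)"]
          gwf.g_Rdisj[of G X Y "add_mset F K"] by (simp add: add_mset_commute)
    qed
  next
    case (g_Rmimp A B G D')
    from g_Rmimp.prems show ?case
    proof (cases rule: add_mset_eq_add_mset_twice_cases)
      case 1 then show ?thesis using F by auto
    next
      case (2 K)
      then show ?thesis using g_Rmimp.IH[of "add_mset B K"] g_Rmimp.hyps
          gwf.g_Rmimp[of A B G "add_mset F K"] by (simp add: add_mset_commute)
    qed
  qed
  then show ?thesis unfolding right_contractible_def by blast
qed

lemma right_contractible: "is_frm F \<Longrightarrow> right_contractible F"
proof (induction "size F" arbitrary: F rule: less_induct)
  case less
  then show ?case by (rule right_contractible_if_smaller_contractible)
qed

lemma gwf_if_gwfs: "gwfs G Z \<Longrightarrow> gwf G {#Z#}"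
proof (induction rule: gwfs.induct)
  case (s_Rconj G X Y) then show ?case using gwf.g_Rconj[of G X "{#}" Y] by simp
next
  case (s_Rdisjl G X Y)
  then show ?case using gwf_weaken[OF s_Rdisjl.IH, of "{#}" "{#Y#}"] gwf.g_Rdisj[of G X Y "{#}"]
    by (simp add: add_mset_commute)
next
  case (s_Rdisjr G Y X)
  then show ?case using gwf_weaken[OF s_Rdisjr.IH, of "{#}" "{#X#}"] gwf.g_Rdisj[of G X Y "{#}"]
    by (simp add: add_mset_commute)
next
  case (s_Lmimp A B G Z)
  (* the left premise still contains A \<supset> B; inverting it duplicates A *)
  have "gwf G {#A, A#}" using gwf_Lmimp_inversion[OF s_Lmimp.IH(1)] by simp
  then have "gwf G {#A#}" using right_contractibleD[OF right_contractible, of A G "{#}"] s_Lmimp.hyps by simp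
  then have "gwf G {#A, Z#}" using gwf_weaken[of G "{#A#}" "{#}" "{#Z#}"] gwfs_ms2[OF s_Lmimp.hyps(4)]
    by (simp add: add_mset_commute)
  then show ?case using gwf.g_Lmimp[of A B G "{#Z#}"] s_Lmimp.IH(2) s_Lmimp.hyps by simp
next
  case (s_Rmimp A B G) then show ?case using gwf.g_Rmimp[of A B G "{#}"] by simp
next
  case (s_LRimp A B C E G) then show ?case using gwf.g_LRimp[of A B C E G "{#}"] by simp
next
  case (s_Rimp A B G) then show ?case using gwf.g_Rimp[of A B G "{#}"] by simp
qed (auto intro: gwf.intros)

section \<open>Hilbert proofs as sequent derivations\<close>

lemma gwfs_identity: "is_frm2 X \<Longrightarrow> ms2 G \<Longrightarrow> gwfs (add_mset X G) X"
proof (induction X arbitrary: G)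
  case (Conj X Y)
  have "gwfs (add_mset X (add_mset Y G)) X" "gwfs (add_mset Y (add_mset X G)) Y" using Conj by simp_all
  then show ?case by (intro gwfs.s_Lconj gwfs.s_Rconj) (simp_all add: add_mset_commute)
next
  case (Disj X Y)
  then show ?case by (intro gwfs.s_Ldisj gwfs.s_Rdisjl gwfs.s_Rdisjr) simp_all
next
  case (Imp A B)
  then have "gwfs {#MImp A B, A#} B"
    using gwfs.s_Lmimp[of A B "{#A#}" B] Imp.IH(1)[of "{#MImp A B#}"] Imp.IH(2)[of "{#A#}"]
    by (simp add: add_mset_commute is_frm2_if_is_frm)
  then show ?case using Imp by (intro gwfs.s_LRimp) simp_all
next
  case (MImp A B)
  then have "gwfs (add_mset (MImp A B) (add_mset A G)) B"
    using gwfs.s_Lmimp[of A B "add_mset A G" B] MImp.IH(1)[of "add_mset (MImp A B) G"]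
      MImp.IH(2)[of "add_mset A G"]
    by (simp add: add_mset_commute is_frm2_if_is_frm)
  then show ?case using MImp by (intro gwfs.s_Rmimp) (simp_all add: add_mset_commute)
qed (auto intro: gwfs.intros)

lemma is_frm_if_hthm: "hthm F \<Longrightarrow> is_frm F"
  by (induction rule: hthm.induct) auto

lemma gwfs_empty_Imp_iff: "is_frm A \<Longrightarrow> is_frm B \<Longrightarrow> gwfs {#} (Imp A B) \<longleftrightarrow> gwfs {#A#} B"
  by (auto elim: gwfs.cases intro: gwfs.s_Rimp)

lemma gwfs_distrib:
  assumes "is_frm2 A" "is_frm2 B" "is_frm2 C"
  shows "gwfs {#Conj A (Disj B C)#} (Disj (Conj A B) (Conj A C))"
proof -
  let ?R = "Disj (Conj A B) (Conj A C)"
  have "gwfs {#B, A#} ?R"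
    using assms gwfs_identity[of A "{#B#}"] gwfs_identity[of B "{#A#}"]
    by (intro gwfs.s_Rdisjl gwfs.s_Rconj) (simp_all add: add_mset_commute)
  moreover have "gwfs {#C, A#} ?R"
    using assms gwfs_identity[of A "{#C#}"] gwfs_identity[of C "{#A#}"]
    by (intro gwfs.s_Rdisjr gwfs.s_Rconj) (simp_all add: add_mset_commute)
  ultimately have "gwfs {#Disj B C, A#} ?R" by (intro gwfs.s_Ldisj)
  then show ?thesis using gwfs.s_Lconj[of A "Disj B C" "{#}" ?R] by (simp add: add_mset_commute)
qed

lemma gwfs_N2:
  assumes frm: "is_frm A" "is_frm B" "is_frm C" "is_frm D"
    and CAD: "gwfs {#C#} (Disj A D)" and CBD: "gwfs {#Conj C B#} D"
  shows "gwfs {#Imp A B#} (Imp C D)"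
proof -
  have frm2: "is_frm2 A" "is_frm2 B" "is_frm2 C" "is_frm2 D" using frm by (simp_all add: is_frm2_if_is_frm)
  let ?G = "{#MImp A B, C#}"
  have "gwfs (add_mset A ?G) A" using frm frm2 gwfs_identity[of A ?G] by simp
  moreover have "gwfs (add_mset B (add_mset A {#C#})) D"
    using gwfs_weaken[OF gwfs_left_inversion[OF CBD, of "{#C, B#}"]] frm2
    by (simp add: add_mset_commute)
  ultimately have "gwfs (add_mset A ?G) D"
    using gwfs.s_Lmimp[of A B "add_mset A {#C#}" D] frm by (simp add: add_mset_commute)
  moreover have "gwfs (add_mset D ?G) D" using frm frm2 gwfs_identity[of D ?G] by simp
  ultimately have "gwfs (add_mset (Disj A D) ?G) D" by (rule gwfs.s_Ldisj)
  moreover have "gwfs ?G (Disj A D)" using gwfs_weaken[OF CAD, of "MImp A B"] frm by (simp add: add_mset_commute)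
  ultimately have "gwfs ?G D" using gwfs_cut by blast
  then show ?thesis using gwfs.s_LRimp[of C D A B "{#}"] frm by simp
qed

lemma gwfs_if_hthm: "hthm F \<Longrightarrow> gwfs {#} F"
proof (induction rule: hthm.induct)
  case (ax_or1 A B)
  then show ?case
    using gwfs_identity[of A "{#}"] by (simp add: gwfs_empty_Imp_iff gwfs.s_Rdisjl is_frm2_if_is_frm)
next
  case (ax_or2 A B)
  then show ?case
    using gwfs_identity[of B "{#}"] by (simp add: gwfs_empty_Imp_iff gwfs.s_Rdisjr is_frm2_if_is_frm)
next
  case (ax_and1 A B)
  then show ?case
    using gwfs_identity[of A "{#B#}"] gwfs.s_Lconj[of A B "{#}" A]
    by (simp add: gwfs_empty_Imp_iff is_frm2_if_is_frm)
next
  case (ax_and2 A B)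
  then show ?case
    using gwfs_identity[of B "{#A#}"] gwfs.s_Lconj[of A B "{#}" B]
    by (simp add: gwfs_empty_Imp_iff is_frm2_if_is_frm add_mset_commute)
next
  case (ax_dist A B C)
  then show ?case using gwfs_distrib[of A B C] by (simp add: gwfs_empty_Imp_iff is_frm2_if_is_frm)
next
  case (ax_id A)
  then show ?case using gwfs_identity[of A "{#}"] by (simp add: gwfs_empty_Imp_iff is_frm2_if_is_frm)
next
  case (ax_bot A)
  then show ?case using gwfs.s_bot[of "{#}" A] by (simp add: gwfs_empty_Imp_iff is_frm2_if_is_frm)
next
  case (r_mp A B)
  have "gwfs {#A#} B" using r_mp.IH(2) is_frm_if_hthm[OF r_mp.hyps(2)] by (simp add: gwfs_empty_Imp_iff)
  then show ?case using gwfs_cut[OF r_mp.IH(1)] by simp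
next
  case (r_wk A B)
  then show ?case using gwfs_weaken[OF r_wk.IH, of B] is_frm_if_hthm[OF r_wk.hyps(1)]
    by (simp add: gwfs_empty_Imp_iff is_frm2_if_is_frm)
next
  case (r_trans A B C)
  have frm: "is_frm A" "is_frm B" "is_frm C" using r_trans.hyps is_frm_if_hthm by fastforce+
  have "gwfs {#A#} B" "gwfs {#B#} C" using r_trans.IH frm by (simp_all add: gwfs_empty_Imp_iff)
  then have "gwfs {#A#} C"
    using gwfs_cut[of "{#A#}" B C] gwfs_weaken[of "{#B#}" C A] frm
    by (simp add: add_mset_commute is_frm2_if_is_frm)
  then show ?case using frm by (simp add: gwfs_empty_Imp_iff)
next
  case (r_conjI A B C)
  have frm: "is_frm A" "is_frm B" "is_frm C" using r_conjI.hyps is_frm_if_hthm by fastforce+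
  then show ?case using r_conjI.IH by (simp add: gwfs_empty_Imp_iff gwfs.s_Rconj)
next
  case (r_disjE A C B)
  have frm: "is_frm A" "is_frm B" "is_frm C" using r_disjE.hyps is_frm_if_hthm by fastforce+
  then show ?case using r_disjE.IH gwfs.s_Ldisj[of A "{#}" C B] by (simp add: gwfs_empty_Imp_iff)
next
  case (r_adj A B) then show ?case by (simp add: gwfs.s_Rconj)
next
  case (r_N2 C A D B)
  have frm: "is_frm A" "is_frm B" "is_frm C" "is_frm D"
    using r_N2.hyps is_frm_if_hthm by fastforce+
  then have "gwfs {#C#} (Disj A D)" "gwfs {#Conj C B#} D"
    using r_N2.IH by (simp_all add: gwfs_empty_Imp_iff)
  then show ?case using gwfs_N2[OF frm] frm by (simp add: gwfs_empty_Imp_iff)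
qed

lemma is_frm_bigconj: "\<forall>C\<in>set Gs. is_frm C \<Longrightarrow> is_frm (bigconj Gs)"
  by (induction Gs rule: bigconj.induct) (auto simp: Top_def)

lemma gwfs_Top: "ms2 G \<Longrightarrow> gwfs G Top"
  unfolding Top_def by (intro gwfs.s_Rimp) (auto intro: gwfs.s_bot)

lemma gwfs_unfold_bigconj: "gwfs (add_mset (bigconj Gs) G) Z \<Longrightarrow> gwfs (mset Gs + G) Z"
proof (induction Gs arbitrary: G rule: bigconj.induct)
  case 1
  then show ?case using gwfs_cut[OF gwfs_Top] gwfs_ms2 by fastforce
next
  case (3 A B Gs)
  then have "gwfs (add_mset (bigconj (B # Gs)) (add_mset A G)) Z"
    using gwfs_left_inversion[of "Conj A (bigconj (B # Gs))" G Z] by (simp add: add_mset_commute)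
  then show ?case using "3.IH"[of "add_mset A G"] by (simp add: add_mset_commute)
qed simp

lemma gwfs_if_hthm_bigconj:
  assumes "\<forall>C\<in>set Gs. is_frm C" "is_frm A" "hthm (Imp (bigconj Gs) A)"
  shows "gwfs (mset Gs) A"
  using gwfs_if_hthm[OF assms(3)] gwfs_unfold_bigconj[of Gs "{#}" A] assms(1,2)
  by (simp add: gwfs_empty_Imp_iff is_frm_bigconj)

section \<open>Prime filter semantics\<close>

lemma is_frm_Top [simp]: "is_frm Top"
  by (simp add: Top_def)

lemma hthm_Top: "hthm Top"
  unfolding Top_def by (rule ax_id) simp

lemma hthm_Imp_Conj_mono:
  assumes "hthm (Imp A A')" "is_frm B"
  shows "hthm (Imp (Conj A B) (Conj A' B))"
proof -
  have "is_frm A" "is_frm A'" using is_frm_if_hthm[OF assms(1)] by simp_all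
  then show ?thesis using assms by (intro r_conjI r_trans[OF ax_and1] ax_and2) simp_all
qed

definition hfilter :: "fm set \<Rightarrow> bool" where
  "hfilter T \<longleftrightarrow> (\<forall>X\<in>T. is_frm X) \<and> Top \<in> T \<and> (\<forall>X Y. X \<in> T \<longrightarrow> hthm (Imp X Y) \<longrightarrow> Y \<in> T)
     \<and> (\<forall>X Y. X \<in> T \<longrightarrow> Y \<in> T \<longrightarrow> Conj X Y \<in> T)"

definition prime_hfilter :: "fm set \<Rightarrow> bool" where
  "prime_hfilter T \<longleftrightarrow> hfilter T \<and> Bot \<notin> T \<and> (\<forall>X Y. Disj X Y \<in> T \<longrightarrow> X \<in> T \<or> Y \<in> T)"

lemma hfilterD:
  assumes "hfilter T"
  shows hfilter_is_frm: "X \<in> T \<Longrightarrow> is_frm X"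
    and hfilter_Top: "Top \<in> T"
    and hfilter_mp: "X \<in> T \<Longrightarrow> hthm (Imp X Y) \<Longrightarrow> Y \<in> T"
    and hfilter_Conj: "X \<in> T \<Longrightarrow> Y \<in> T \<Longrightarrow> Conj X Y \<in> T"
  using assms unfolding hfilter_def by blast+

lemma hfilter_hthm: "hfilter T \<Longrightarrow> hthm Y \<Longrightarrow> Y \<in> T"
  by (meson hfilter_Top hfilter_mp is_frm_Top r_wk)

lemma hfilter_Conj_iff:
  assumes "hfilter T" shows "Conj X Y \<in> T \<longleftrightarrow> X \<in> T \<and> Y \<in> T"
proof
  assume XY: "Conj X Y \<in> T"
  then have "is_frm X" "is_frm Y" using hfilter_is_frm[OF assms XY] by simp_all
  then show "X \<in> T \<and> Y \<in> T" using hfilter_mp[OF assms XY] ax_and1 ax_and2 by blast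
qed (use hfilter_Conj[OF assms] in blast)

lemma hfilter_principal: "is_frm P \<Longrightarrow> hfilter {Y. hthm (Imp P Y)}"
  unfolding hfilter_def
proof (intro conjI allI impI ballI)
  fix X assume "X \<in> {Y. hthm (Imp P Y)}"
  then show "is_frm X" using is_frm_if_hthm by fastforce
qed (auto intro: r_wk hthm_Top r_trans r_conjI)

lemma hfilter_Union_chain:
  assumes "C \<noteq> {}" "chain\<^sub>\<subseteq> C" "\<forall>F\<in>C. hfilter F"
  shows "hfilter (\<Union>C)"
  unfolding hfilter_def
proof (intro conjI allI impI ballI)
  show "Top \<in> \<Union>C" using assms(1,3) hfilter_Top by blast
next
  fix X Y assume "X \<in> \<Union>C" "Y \<in> \<Union>C"
  then obtain F where "F \<in> C" "X \<in> F" "Y \<in> F" using assms(2) unfolding chain_subset_def by blast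
  then show "Conj X Y \<in> \<Union>C" using assms(3) hfilter_Conj by blast
next
  fix X assume "X \<in> \<Union>C"
  then show "is_frm X" using assms(3) hfilter_is_frm by blast
next
  fix X Y assume "X \<in> \<Union>C" "hthm (Imp X Y)"
  then show "Y \<in> \<Union>C" using assms(3) hfilter_mp by blast
qed

definition hfilter_extension :: "fm set \<Rightarrow> fm \<Rightarrow> fm set" where
  "hfilter_extension M x = {Z. \<exists>m\<in>M. hthm (Imp (Conj m x) Z)}"

lemma hfilter_extension:
  assumes M: "hfilter M" and x: "is_frm x"
  shows "hfilter (hfilter_extension M x)" "M \<subseteq> hfilter_extension M x" "x \<in> hfilter_extension M x"
proof -
  show "hfilter (hfilter_extension M x)" unfolding hfilter_def
  proof (intro conjI allI impI ballI)
    fix Z assume "Z \<in> hfilter_extension M x"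
    then show "is_frm Z" unfolding hfilter_extension_def using is_frm_if_hthm by fastforce
  next
    show "Top \<in> hfilter_extension M x" unfolding hfilter_extension_def
      using hfilter_Top[OF M] x by (auto intro!: bexI[of _ Top] r_wk hthm_Top)
  next
    fix X Y assume "X \<in> hfilter_extension M x" "hthm (Imp X Y)"
    then show "Y \<in> hfilter_extension M x" unfolding hfilter_extension_def by (blast intro: r_trans)
  next
    fix X Y assume "X \<in> hfilter_extension M x" "Y \<in> hfilter_extension M x"
    then obtain m n where mn: "m \<in> M" "n \<in> M" "hthm (Imp (Conj m x) X)" "hthm (Imp (Conj n x) Y)"
      unfolding hfilter_extension_def by blast
    have "is_frm m" "is_frm n" using mn hfilter_is_frm[OF M] by auto
    then have "hthm (Imp (Conj (Conj m n) x) (Conj m x))" "hthm (Imp (Conj (Conj m n) x) (Conj n x))"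
      using x by (simp_all add: hthm_Imp_Conj_mono ax_and1 ax_and2)
    then have "hthm (Imp (Conj (Conj m n) x) (Conj X Y))"
      using mn(3,4) by (blast intro: r_conjI r_trans)
    then show "Conj X Y \<in> hfilter_extension M x"
      unfolding hfilter_extension_def using hfilter_Conj[OF M mn(1,2)] by blast
  qed
  show "M \<subseteq> hfilter_extension M x" unfolding hfilter_extension_def
    using hfilter_is_frm[OF M] x by (auto intro: ax_and1)
  show "x \<in> hfilter_extension M x" unfolding hfilter_extension_def
    using hfilter_Top[OF M] x by (auto intro!: bexI[of _ Top] ax_and2)
qed

lemma prime_hfilter_if_maximal:
  assumes M: "hfilter M" and Q: "is_frm Q" "Q \<notin> M"
    and maximal: "\<And>F. hfilter F \<Longrightarrow> M \<subseteq> F \<Longrightarrow> Q \<notin> F \<Longrightarrow> F = M"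
  shows "prime_hfilter M"
proof -
  have escape: "\<exists>m\<in>M. hthm (Imp (Conj m x) Q)" if x: "is_frm x" "x \<notin> M" for x
  proof (rule ccontr)
    assume "\<not> ?thesis"
    then have "Q \<notin> hfilter_extension M x" unfolding hfilter_extension_def by blast
    then have "hfilter_extension M x = M" using maximal hfilter_extension[OF M x(1)] by blast
    then show False using hfilter_extension(3)[OF M x(1)] x(2) by blast
  qed
  have "Bot \<notin> M" using hfilter_mp[OF M _ ax_bot[OF Q(1)]] Q(2) by blast
  moreover have "x \<in> M \<or> y \<in> M" if xy: "Disj x y \<in> M" for x y
  proof (rule ccontr)
    assume "\<not> (x \<in> M \<or> y \<in> M)"
    moreover have x: "is_frm x" and y: "is_frm y" using hfilter_is_frm[OF M xy] by simp_all
    ultimately obtain m n where mn: "m \<in> M" "n \<in> M" "hthm (Imp (Conj m x) Q)" "hthm (Imp (Conj n y) Q)"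
      using escape by blast
    have "is_frm m" "is_frm n" using mn hfilter_is_frm[OF M] by auto
    then have "hthm (Imp (Conj (Conj m n) x) (Conj m x))" "hthm (Imp (Conj (Conj m n) y) (Conj n y))"
      using x y by (simp_all add: hthm_Imp_Conj_mono ax_and1 ax_and2)
    then have "hthm (Imp (Disj (Conj (Conj m n) x) (Conj (Conj m n) y)) Q)"
      using mn(3,4) by (blast intro: r_disjE r_trans)
    moreover have "hthm (Imp (Conj (Conj m n) (Disj x y)) (Disj (Conj (Conj m n) x) (Conj (Conj m n) y)))"
      using \<open>is_frm m\<close> \<open>is_frm n\<close> x y by (intro ax_dist) simp_all
    moreover have "Conj (Conj m n) (Disj x y) \<in> M" using mn(1,2) xy hfilter_Conj[OF M] by blast
    ultimately have "Q \<in> M" using hfilter_mp[OF M] r_trans by blast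
    then show False using Q(2) by blast
  qed
  ultimately show ?thesis unfolding prime_hfilter_def using M by blast
qed

lemma prime_hfilter_separation:
  assumes P: "is_frm P" and Q: "is_frm Q" and PQ: "\<not> hthm (Imp P Q)"
  obtains T where "prime_hfilter T" "P \<in> T" "Q \<notin> T"
proof -
  define A where "A = {F. hfilter F \<and> P \<in> F \<and> Q \<notin> F}"
  have principal: "{Y. hthm (Imp P Y)} \<in> A"
    unfolding A_def using hfilter_principal[OF P] ax_id[OF P] PQ by simp
  have "\<exists>U\<in>A. \<forall>X\<in>C. X \<subseteq> U" if C: "C \<in> chains A" for C
  proof (cases "C = {}")
    case False
    have "hfilter (\<Union>C)"
      using hfilter_Union_chain[OF False] C unfolding chains_def A_def by blast
    then have "\<Union>C \<in> A" using False chainsD2[OF C] unfolding A_def by blast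
    then show ?thesis by blast
  qed (use principal in blast)
  then obtain M where "M \<in> A" and maximal: "\<forall>F\<in>A. M \<subseteq> F \<longrightarrow> F = M"
    using Zorn_Lemma2[of A] by blast
  then have "prime_hfilter M" using prime_hfilter_if_maximal[OF _ Q] unfolding A_def by blast
  then show ?thesis using that \<open>M \<in> A\<close> unfolding A_def by blast
qed

lemma hthm_if_prime_hfilters:
  assumes "is_frm P" "is_frm Q" "\<And>T. prime_hfilter T \<Longrightarrow> P \<in> T \<Longrightarrow> Q \<in> T"
  shows "hthm (Imp P Q)"
  using prime_hfilter_separation[OF assms(1,2)] assms(3) by blast

fun holds :: "fm set \<Rightarrow> fm \<Rightarrow> bool" where
  "holds T (Atom p) \<longleftrightarrow> Atom p \<in> T"
| "holds T Bot \<longleftrightarrow> False"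
| "holds T (Conj X Y) \<longleftrightarrow> holds T X \<and> holds T Y"
| "holds T (Disj X Y) \<longleftrightarrow> holds T X \<or> holds T Y"
| "holds T (Imp A B) \<longleftrightarrow> Imp A B \<in> T"
| "holds T (MImp A B) \<longleftrightarrow> \<not> holds T A \<or> holds T B"

lemma holds_iff_mem: "prime_hfilter T \<Longrightarrow> is_frm X \<Longrightarrow> holds T X \<longleftrightarrow> X \<in> T"
proof (induction X)
  case (Conj X Y)
  then show ?case using hfilter_Conj_iff[of T X Y] by (simp add: prime_hfilter_def)
next
  case (Disj X Y)
  then have T: "hfilter T" "Disj X Y \<in> T \<Longrightarrow> X \<in> T \<or> Y \<in> T" by (auto simp: prime_hfilter_def)
  have "X \<in> T \<or> Y \<in> T \<Longrightarrow> Disj X Y \<in> T" using Disj.prems(2) hfilter_mp[OF T(1)] ax_or1 ax_or2 by force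
  then show ?case using Disj T by auto
qed (auto simp: prime_hfilter_def)

definition valid :: "fm multiset \<Rightarrow> fm multiset \<Rightarrow> bool" where
  "valid G D \<longleftrightarrow> (\<forall>T. prime_hfilter T \<longrightarrow> (\<forall>X\<in>#G. holds T X) \<longrightarrow> (\<exists>Y\<in>#D. holds T Y))"

lemma valid_if_gwf: "gwf G D \<Longrightarrow> valid G D"
proof (induction rule: gwf.induct)
  case (g_LRimp A B C E G D)
  note frm = g_LRimp.hyps(1-4)
  have AB: "B \<in> T" if "prime_hfilter T" "C \<notin> T \<or> E \<in> T" "A \<in> T" for T
    using g_LRimp.IH that frm unfolding valid_def by (auto simp: holds_iff_mem)
  have "hthm (Imp A (Disj C B))"
  proof (rule hthm_if_prime_hfilters)
    fix T assume T: "prime_hfilter T" "A \<in> T"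
    then have "C \<in> T \<or> B \<in> T" using AB by blast
    then show "Disj C B \<in> T"
      using holds_iff_mem[OF T(1), of "Disj C B"] holds_iff_mem[OF T(1), of C] holds_iff_mem[OF T(1), of B] frm
      by simp
  qed (use frm in simp_all)
  moreover have "hthm (Imp (Conj A E) B)"
  proof (rule hthm_if_prime_hfilters)
    fix T assume T: "prime_hfilter T" "Conj A E \<in> T"
    then show "B \<in> T" using AB hfilter_Conj_iff[of T A E] by (auto simp: prime_hfilter_def)
  qed (use frm in simp_all)
  ultimately have "hthm (Imp (Imp C E) (Imp A B))" by (rule r_N2)
  then show ?case unfolding valid_def using hfilter_mp by (force simp: prime_hfilter_def)
next
  case (g_Rimp A B G D)
  have "hthm (Imp A B)"
    by (rule hthm_if_prime_hfilters) (use g_Rimp in \<open>auto simp: valid_def holds_iff_mem\<close>)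
  then show ?case unfolding valid_def using hfilter_hthm by (force simp: prime_hfilter_def)
qed (auto simp: valid_def)

lemma mem_if_bigconj_mem: "hfilter T \<Longrightarrow> bigconj Gs \<in> T \<Longrightarrow> C \<in> set Gs \<Longrightarrow> C \<in> T"
  by (induction Gs rule: bigconj.induct) (auto simp: hfilter_Conj_iff)

lemma hthm_if_gwf_bigconj:
  assumes Gs: "\<forall>C\<in>set Gs. is_frm C" and A: "is_frm A" and "gwf (mset Gs) {#A#}"
  shows "hthm (Imp (bigconj Gs) A)"
proof (rule hthm_if_prime_hfilters)
  fix T assume T: "prime_hfilter T" "bigconj Gs \<in> T"
  then have "\<forall>X\<in>#mset Gs. holds T X"
    using mem_if_bigconj_mem holds_iff_mem Gs by (auto simp: prime_hfilter_def)
  then have "holds T A" using valid_if_gwf[OF assms(3)] T(1) unfolding valid_def by simp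
  then show "A \<in> T" using holds_iff_mem[OF T(1) A] by simp
qed (use Gs A is_frm_bigconj in auto)

theorem corollary5p7:
  fixes Gs :: "fm list" and A :: fm
  assumes "distinct Gs" and "\<forall>C\<in>set Gs. is_frm C" and "is_frm A"
  shows "(hthm (Imp (bigconj Gs) A) \<longleftrightarrow> gwf (mset Gs) {#A#})
       \<and> (gwf (mset Gs) {#A#} \<longleftrightarrow> gwfs (mset Gs) A)"
  using gwfs_if_hthm_bigconj[OF assms(2,3)] gwf_if_gwfs hthm_if_gwf_bigconj[OF assms(2,3)] by blast

end
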